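(* Let $(\mathcal{F}_\alpha)_{\alpha<\omega_1}$ be a transfinite family. For every $\alpha<\omega_1$ and every infinite $L\subset\mathbb{N}$, $\mathbb{I}(\mathcal{F}_\alpha,L)=\alpha$.
   Context: An approximating family assigns to each countable limit ordinal $\alpha$ finite sets $A_n(\alpha)\subset[0,\alpha)$, $n\in\mathbb{N}$, with $A_n(\alpha)\subset A_{n+1}(\alpha)$ and $\lim_n\max A_n(\alpha)=\alpha$. The transfinite family it defines: $\mathcal{F}_0=\{\emptyset\}$; $\mathcal{F}_{\beta+1}=\{\{n\}\cup E:n\in\mathbb{N},E\in\mathcal{F}_\beta\}\cup\{\emptyset\}$; for limit $\alpha$, $\mathcal{F}_\alpha=\{\emptyset\}\cup\{E\ne\emptyset:E\in\bigcup_{\beta\in A_{\min E}(\alpha)}\mathcal{F}_\beta\}$. For $N=\{n_1<n_2<\dots\}$, $\mathcal{F}^N=\{\{n_i:i\in E\}:E\in\mathcal{F}\}$. A hereditary set $\mathcal{A}$ of finite subsets of $\mathbb{N}$ is $\alpha$-large on an infinite $P$ if for every infinite $M\subset P$ there is an infinite $N\subset M$ with $\mathcal{F}_\alpha^N\subset\mathcal{A}$ (independent of the approximating family); $\mathbb{I}(\mathcal{A},P)=\sup\{\alpha<\omega_1:\mathcal{A}\text{ is }\alpha\text{-large on }P\}$. *)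

theory Defs
  imports Main "HOL-Library.Countable_Set" "HOL-Library.Infinite_Set"
begin

text \<open>Countable ordinals are modelled as elements of a well-ordered type 'o all of whose
  proper initial segments are countable (i.e. 'o is order-isomorphic to an ordinal
  \<le> omega_1).  Natural numbers are the HOL type nat (starting at 0).\<close>

definition countable_ordinals :: "('o::wellorder) itself \<Rightarrow> bool" where
  "countable_ordinals _ \<longleftrightarrow> (\<forall>x::'o. countable {..<x})"

definition is_zero_ord :: "'o::wellorder \<Rightarrow> bool" where
  "is_zero_ord a \<longleftrightarrow> (\<forall>b. \<not> b < a)"

definition is_succ_of :: "'o::wellorder \<Rightarrow> 'o \<Rightarrow> bool" where
  "is_succ_of a b \<longleftrightarrow> b < a \<and> (\<forall>c. \<not> (b < c \<and> c < a))"

definition is_limit_ord :: "'o::wellorder \<Rightarrow> bool" where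
  "is_limit_ord a \<longleftrightarrow> \<not> is_zero_ord a \<and> (\<forall>b. \<not> is_succ_of a b)"

text \<open>Approximating family: A a n = A_n(a) for limit a.  The condition
  lim_n max A_n(a) = a is rendered as cofinality (A_n increasing, contained in [0,a)).\<close>
definition approximating_family :: "('o::wellorder \<Rightarrow> nat \<Rightarrow> 'o set) \<Rightarrow> bool" where
  "approximating_family A \<longleftrightarrow>
     (\<forall>a. is_limit_ord a \<longrightarrow>
        (\<forall>n. finite (A a n) \<and> A a n \<subseteq> {..<a} \<and> A a n \<subseteq> A a (Suc n)) \<and>
        (\<forall>b<a. \<exists>n. \<exists>c\<in>A a n. b \<le> c))"

definition transfinite_family ::
    "('o::wellorder \<Rightarrow> nat \<Rightarrow> 'o set) \<Rightarrow> ('o \<Rightarrow> nat set set) \<Rightarrow> bool" where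
  "transfinite_family A F \<longleftrightarrow>
     (\<forall>a. is_zero_ord a \<longrightarrow> F a = {{}}) \<and>
     (\<forall>a b. is_succ_of a b \<longrightarrow> F a = {insert n E | n E. E \<in> F b} \<union> {{}}) \<and>
     (\<forall>a. is_limit_ord a \<longrightarrow>
        F a = {{}} \<union> {E. E \<noteq> {} \<and> E \<in> (\<Union>b\<in>A a (Min E). F b)})"

text \<open>F^N, where enumerate N is the increasing enumeration n_0 < n_1 < ... of N.\<close>
definition fam_on :: "nat set set \<Rightarrow> nat set \<Rightarrow> nat set set" where
  "fam_on \<F> N = (\<lambda>E. enumerate N ` E) ` \<F>"

definition is_large :: "('o::wellorder \<Rightarrow> nat set set) \<Rightarrow> 'o \<Rightarrow> nat set set \<Rightarrow> nat set \<Rightarrow> bool" where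
  "is_large F a \<A> P \<longleftrightarrow>
     (\<forall>M. M \<subseteq> P \<and> infinite M \<longrightarrow> (\<exists>N. N \<subseteq> M \<and> infinite N \<and> fam_on (F a) N \<subseteq> \<A>))"

definition index_eq :: "('o::wellorder \<Rightarrow> nat set set) \<Rightarrow> nat set set \<Rightarrow> nat set \<Rightarrow> 'o \<Rightarrow> bool" where
  "index_eq F \<A> P a \<longleftrightarrow>
     (\<forall>b. is_large F b \<A> P \<longrightarrow> b \<le> a) \<and>
     (\<forall>c. (\<forall>b. is_large F b \<A> P \<longrightarrow> b \<le> c) \<longrightarrow> a \<le> c)"

end

theory Submission
  imports Defs
begin

text \<open>Call a node E of a family G of finite sets of rank at least b if E \<in> G and, for
  every c < b, infinitely many one-point extensions of E have rank at least c.  By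
  induction on a, the root of F_a has rank at least a; and since F_a is spreading,
  F_a^M \<subseteq> F_a for every infinite M, so F_a is a-large on every L.

  Conversely, rank is preserved by relabelling and by enlarging the family, so
  F_b^N \<subseteq> F_a forces the root of F_a to have rank at least b.  But every
  nonempty node of F_a has rank below a, again by induction on a: at a successor a' + 1,
  deleting the minimum maps F_a into F_a'; at a limit, all end-extensions of E in F_a
  lie in the finite union of the F_c with c \<in> A_{min E}(a), and the rank of a node
  in a finite union of hereditary families is attained in one of them.  Hence the root
  of F_a has rank at most a.\<close>

definition hereditary :: "nat set set \<Rightarrow> bool" where
  "hereditary G \<longleftrightarrow> (\<forall>X\<in>G. \<forall>Y\<subseteq>X. Y \<in> G)"

definition end_extends :: "nat set \<Rightarrow> nat set \<Rightarrow> bool" where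
  "end_extends X E \<longleftrightarrow> E \<subseteq> X \<and> (\<forall>x\<in>X - E. \<forall>e\<in>E. e < x)"

lemma Min_end_extension:
  assumes ext: "end_extends X E" and "finite X" "E \<noteq> {}"
  shows "Min X = Min E"
proof (rule Min_eqI)
  have "finite E" using ext \<open>finite X\<close> finite_subset unfolding end_extends_def by blast
  then have E: "Min E \<in> E" "\<forall>e\<in>E. Min E \<le> e" using \<open>E \<noteq> {}\<close> by simp_all
  then show "Min E \<in> X" using ext unfolding end_extends_def by blast
  show "Min E \<le> y" if "y \<in> X" for y
    using E ext that unfolding end_extends_def by (cases "y \<in> E") (auto intro: less_imp_le)
qed fact

lemma INFM_mono_imp: "(\<And>x. P x \<longrightarrow> Q x) \<Longrightarrow> (\<exists>\<^sub>\<infinity>x. P x) \<longrightarrow> (\<exists>\<^sub>\<infinity>x. Q x)"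
  by (metis INFM_mono)

text \<open>The new elements n need not exceed the elements of E; this makes the rank invariant
  under injective relabelling of the ground set.\<close>

inductive rank_ge :: "nat set set \<Rightarrow> nat set \<Rightarrow> 'o::wellorder \<Rightarrow> bool" for G where
  rank_geI: "E \<in> G \<Longrightarrow> (\<And>c. c < b \<Longrightarrow> \<exists>\<^sub>\<infinity>n. rank_ge G (insert n E) c) \<Longrightarrow> rank_ge G E b"
  monos INFM_mono_imp

lemma rank_ge_mem: "rank_ge G E b \<Longrightarrow> E \<in> G"
  by (auto elim: rank_ge.cases)

lemma rank_ge_INFM: "rank_ge G E b \<Longrightarrow> c < b \<Longrightarrow> \<exists>\<^sub>\<infinity>n. rank_ge G (insert n E) c"
  by (auto elim: rank_ge.cases)

lemma rank_ge_le: "rank_ge G E b \<Longrightarrow> c \<le> b \<Longrightarrow> rank_ge G E c"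
  by (auto elim!: rank_ge.cases intro!: rank_geI)

lemma rank_ge_INFM_le:
  "\<exists>\<^sub>\<infinity>n. rank_ge G (insert n E) b \<Longrightarrow> c \<le> b \<Longrightarrow> \<exists>\<^sub>\<infinity>n. rank_ge G (insert n E) c"
  by (auto elim: INFM_mono intro: rank_ge_le)

lemma rank_ge_mono:
  assumes "rank_ge G E b" and "G \<subseteq> G'"
  shows "rank_ge G' E b"
  using assms(1)
proof (induction rule: rank_ge.induct)
  case (rank_geI E b)
  show ?case
  proof (rule rank_ge.rank_geI)
    show "E \<in> G'" using rank_geI.hyps assms(2) by blast
    show "\<exists>\<^sub>\<infinity>n. rank_ge G' (insert n E) c" if "c < b" for c
      using rank_geI.IH[OF that] by (rule INFM_mono) blast
  qed
qed

lemma rank_ge_root_le: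
  fixes a b :: "'o::wellorder"
  assumes "rank_ge G {} b" and "\<And>n. \<not> rank_ge G {n} a"
  shows "b \<le> a"
  using rank_ge_INFM[OF assms(1), of a] assms(2) by (metis INFM_EX not_le)

lemma rank_ge_image:
  assumes "rank_ge G E b" and "inj g"
  shows "rank_ge (image g ` G) (g ` E) b"
  using assms(1)
proof (induction rule: rank_ge.induct)
  case (rank_geI E b)
  show ?case
  proof (rule rank_ge.rank_geI)
    show "g ` E \<in> image g ` G" using rank_geI.hyps by blast
    fix c assume "c < b"
    have "\<exists>\<^sub>\<infinity>n. rank_ge (image g ` G) (insert (g n) (g ` E)) c"
      using rank_geI.IH[OF \<open>c < b\<close>] by (rule INFM_mono) simp
    then show "\<exists>\<^sub>\<infinity>m. rank_ge (image g ` G) (insert m (g ` E)) c"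
      using assms(2) by (rule INFM_inj[where P = "\<lambda>m. rank_ge _ (insert m (g ` E)) c"])
  qed
qed

lemma rank_ge_insert:
  assumes "rank_ge G E b" and "\<And>X. X \<in> G \<Longrightarrow> insert n X \<in> G'"
  shows "rank_ge G' (insert n E) b"
  using assms(1)
proof (induction rule: rank_ge.induct)
  case (rank_geI E b)
  show ?case
  proof (rule rank_ge.rank_geI)
    show "insert n E \<in> G'" using assms(2) rank_geI.hyps .
    show "\<exists>\<^sub>\<infinity>m. rank_ge G' (insert m (insert n E)) c" if "c < b" for c
      using rank_geI.IH[OF that] by (rule INFM_mono) (simp add: insert_commute)
  qed
qed

text \<open>Extensions by large elements leave the minimum alone, so the children of E - {Min E}
  are eventually the children of E with the minimum removed.\<close>

lemma rank_ge_remove_Min: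
  assumes "rank_ge G E b" "E \<noteq> {}" "finite E"
    and "\<And>X. X \<in> G \<Longrightarrow> X \<noteq> {} \<Longrightarrow> X - {Min X} \<in> G'"
  shows "rank_ge G' (E - {Min E}) b"
  using assms
proof (induction rule: rank_ge.induct)
  case (rank_geI E b)
  show ?case
  proof (rule rank_ge.rank_geI)
    show "E - {Min E} \<in> G'" using rank_geI by blast
    fix c assume "c < b"
    have "\<exists>\<^sub>\<infinity>n. rank_ge G' (insert n E - {Min (insert n E)}) c"
      using rank_geI.IH[OF \<open>c < b\<close>] by (rule INFM_mono) (use rank_geI.prems in auto)
    moreover have "\<forall>\<^sub>\<infinity>n. Min E < n" by (auto simp: MOST_nat)
    ultimately have "\<exists>\<^sub>\<infinity>n. rank_ge G' (insert n E - {Min (insert n E)}) c \<and> Min E < n"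
      by (rule INFM_conjI)
    then show "\<exists>\<^sub>\<infinity>n. rank_ge G' (insert n (E - {Min E})) c"
      by (rule INFM_mono) (use rank_geI.prems in \<open>auto simp: insert_Diff_if\<close>)
  qed
qed

lemma rank_ge_end_extensions:
  assumes "rank_ge G E b" "finite E" and "\<And>X. end_extends X E \<Longrightarrow> X \<in> G \<Longrightarrow> X \<in> G'"
  shows "rank_ge G' E b"
  using assms
proof (induction rule: rank_ge.induct)
  case (rank_geI E b)
  show ?case
  proof (rule rank_ge.rank_geI)
    show "E \<in> G'" using rank_geI by (simp add: end_extends_def)
    fix c assume "c < b"
    have large: "\<forall>\<^sub>\<infinity>n. \<forall>e\<in>E. e < n"
      using \<open>finite E\<close> by (subst MOST_finite_Ball_distrib) (auto simp: MOST_nat)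
    have "end_extends X E" if "end_extends X (insert n E)" "\<forall>e\<in>E. e < n" for X n
      using that unfolding end_extends_def by auto
    then show "\<exists>\<^sub>\<infinity>n. rank_ge G' (insert n E) c"
      using INFM_conjI[OF rank_geI.IH[OF \<open>c < b\<close>] large]
      by (elim INFM_mono) (use rank_geI.prems in blast)
  qed
qed

lemma rank_ge_Un:
  assumes "rank_ge (G1 \<union> G2) E b" and "hereditary G1" "hereditary G2"
  shows "rank_ge G1 E b \<or> rank_ge G2 E b"
  using assms(1)
proof (induction b arbitrary: E rule: less_induct)
  case (less b E)
  let ?often = "\<lambda>G c. \<exists>\<^sub>\<infinity>n. rank_ge G (insert n E) c"
  have split: "?often G1 c \<or> ?often G2 c" if "c < b" for c
  proof -
    have "\<exists>\<^sub>\<infinity>n. rank_ge G1 (insert n E) c \<or> rank_ge G2 (insert n E) c"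
      using rank_ge_INFM[OF less.prems that] by (rule INFM_mono) (rule less.IH[OF that])
    then show ?thesis by (simp only: INFM_disj_distrib)
  qed
  have often_cases: "(\<forall>c<b. ?often G1 c) \<or> (\<forall>c<b. ?often G2 c)"
  proof (rule ccontr)
    assume "\<not> ?thesis"
    then obtain c1 c2 where "c1 < b" "\<not> ?often G1 c1" "c2 < b" "\<not> ?often G2 c2" by blast
    with split show False
      using rank_ge_INFM_le le_cases[of c1 c2] by metis
  qed
  have rank: "rank_ge G E b" if "hereditary G" "\<forall>c<b. ?often G c" "E \<in> G \<or> (\<exists>c. c < b)" for G
  proof (rule rank_ge.rank_geI)
    show "E \<in> G"
      using that INFM_EX rank_ge_mem subset_insertI unfolding hereditary_def by metis
  qed (use that in blast)
  show ?case
  proof (cases "\<exists>c. c < b")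
    case True
    then show ?thesis using often_cases rank assms(2,3) by blast
  next
    case False
    then show ?thesis using rank_ge_mem[OF less.prems] rank assms(2,3) by blast
  qed
qed

lemma hereditary_UN: "(\<And>i. i \<in> I \<Longrightarrow> hereditary (G i)) \<Longrightarrow> hereditary (\<Union>i\<in>I. G i)"
  unfolding hereditary_def by blast

lemma rank_ge_UN:
  assumes "rank_ge (\<Union>i\<in>I. G i) E b" and "finite I" and "\<And>i. i \<in> I \<Longrightarrow> hereditary (G i)"
  shows "\<exists>i\<in>I. rank_ge (G i) E b"
  using assms(2,1,3)
proof (induction I rule: finite_induct)
  case empty
  then show ?case using rank_ge_mem by fastforce
next
  case (insert i I)
  then have "rank_ge (G i) E b \<or> rank_ge (\<Union>j\<in>I. G j) E b"
    by (intro rank_ge_Un) (auto intro: hereditary_UN)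
  then show ?case using insert.IH insert.prems(2) by blast
qed

lemma ordinal_cases:
  fixes a :: "'o::wellorder"
  obtains (zero) "is_zero_ord a" | (succ) b where "is_succ_of a b" | (limit) "is_limit_ord a"
  unfolding is_limit_ord_def by blast

lemma is_succ_of_less: "is_succ_of a b \<Longrightarrow> b < a"
  by (simp add: is_succ_of_def)

lemma is_succ_of_le: "is_succ_of a b \<Longrightarrow> c < a \<Longrightarrow> c \<le> (b::'o::wellorder)"
  unfolding is_succ_of_def using not_less by blast

lemma is_zero_ord_not_less: "is_zero_ord a \<Longrightarrow> \<not> c < a"
  by (simp add: is_zero_ord_def)

lemma is_limit_ord_dense: "is_limit_ord a \<Longrightarrow> c < a \<Longrightarrow> \<exists>d. c < d \<and> d < (a::'o::wellorder)"
  unfolding is_limit_ord_def is_succ_of_def by blast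

locale transfinite_hierarchy =
  fixes A :: "'o::wellorder \<Rightarrow> nat \<Rightarrow> 'o set" and F :: "'o \<Rightarrow> nat set set"
  assumes approximating: "approximating_family A" and transfinite: "transfinite_family A F"
begin

lemma A_less: "is_limit_ord a \<Longrightarrow> c \<in> A a n \<Longrightarrow> c < a"
  using approximating unfolding approximating_family_def by blast

lemma finite_A: "is_limit_ord a \<Longrightarrow> finite (A a n)"
  using approximating unfolding approximating_family_def by blast

lemma A_mono: "is_limit_ord a \<Longrightarrow> n \<le> m \<Longrightarrow> A a n \<subseteq> A a m"
  using approximating unfolding approximating_family_def by (metis lift_Suc_mono_le)

lemma A_cofinal: "is_limit_ord a \<Longrightarrow> b < a \<Longrightarrow> \<exists>n. \<exists>c\<in>A a n. b \<le> c"
  using approximating unfolding approximating_family_def by blast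

lemma F_zero: "is_zero_ord a \<Longrightarrow> F a = {{}}"
  using transfinite[unfolded transfinite_family_def, THEN conjunct1] by blast

lemma F_succ: "is_succ_of a b \<Longrightarrow> F a = {insert n E | n E. E \<in> F b} \<union> {{}}"
  using transfinite[unfolded transfinite_family_def, THEN conjunct2, THEN conjunct1] by blast

lemma F_limit:
  "is_limit_ord a \<Longrightarrow> F a = {{}} \<union> {E. E \<noteq> {} \<and> E \<in> (\<Union>b\<in>A a (Min E). F b)}"
  using transfinite[unfolded transfinite_family_def, THEN conjunct2, THEN conjunct2] by blast

lemma mem_F_zero: "is_zero_ord a \<Longrightarrow> X \<in> F a \<Longrightarrow> X = {}"
  by (simp add: F_zero)

lemma mem_F_succI: "is_succ_of a b \<Longrightarrow> E \<in> F b \<Longrightarrow> insert n E \<in> F a"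
  by (subst F_succ) auto

lemma mem_F_succE:
  "is_succ_of a b \<Longrightarrow> X \<in> F a \<Longrightarrow> X \<noteq> {} \<Longrightarrow> \<exists>n E. X = insert n E \<and> E \<in> F b"
  by (subst (asm) F_succ) auto

lemma mem_F_limitI:
  assumes "is_limit_ord a" "c \<in> A a m" "m \<le> Min X" "X \<noteq> {}" "X \<in> F c"
  shows "X \<in> F a"
proof -
  have "c \<in> A a (Min X)" using A_mono[OF assms(1,3)] assms(2) by blast
  then show ?thesis using assms(1,4,5) by (subst F_limit) auto
qed

lemma mem_F_limitE:
  "is_limit_ord a \<Longrightarrow> X \<in> F a \<Longrightarrow> X \<noteq> {} \<Longrightarrow> \<exists>c\<in>A a (Min X). X \<in> F c"
  by (subst (asm) F_limit) auto

lemma empty_mem_F: "{} \<in> F a"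
proof (cases a rule: ordinal_cases)
  case zero
  then show ?thesis by (simp add: F_zero)
next
  case (succ b)
  then show ?thesis by (subst F_succ) auto
next
  case limit
  then show ?thesis by (subst F_limit) auto
qed

lemma finite_F: "X \<in> F a \<Longrightarrow> finite X"
proof (induction a arbitrary: X rule: less_induct)
  case (less a X)
  show ?case
  proof (cases a rule: ordinal_cases)
    case zero
    then show ?thesis using less.prems mem_F_zero by blast
  next
    case (succ b)
    then show ?thesis
      using less mem_F_succE[OF succ less.prems] is_succ_of_less by (cases "X = {}") auto
  next
    case limit
    then show ?thesis
      using less mem_F_limitE[OF limit less.prems] A_less[OF limit] by (cases "X = {}") auto
  qed
qed

lemma hereditary_F: "hereditary (F a)"
  unfolding hereditary_def
proof (intro ballI allI impI)
  fix X Y assume "X \<in> F a" "Y \<subseteq> X"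
  then show "Y \<in> F a"
  proof (induction a arbitrary: X Y rule: less_induct)
    case (less a X Y)
    show ?case
    proof (cases "Y = {}")
      case True
      then show ?thesis by (simp add: empty_mem_F)
    next
      case False
      show ?thesis
      proof (cases a rule: ordinal_cases)
        case zero
        then show ?thesis using mem_F_zero[OF zero less.prems(1)] less.prems(2) False by simp
      next
        case (succ b)
        obtain n E where X: "X = insert n E" "E \<in> F b"
          using mem_F_succE[OF succ less.prems(1)] less.prems(2) False by blast
        have "Y - {n} \<subseteq> E" using X(1) less.prems(2) by blast
        then have "Y - {n} \<in> F b" by (rule less.IH[OF is_succ_of_less[OF succ] X(2)])
        moreover obtain y where "Y = insert y (Y - {n})"
          using False by (cases "n \<in> Y") auto
        ultimately show ?thesis by (metis mem_F_succI[OF succ])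
      next
        case limit
        have "Min X \<le> Min Y"
          using Min_antimono[OF less.prems(2) False finite_F[OF less.prems(1)]] .
        moreover obtain c where c: "c \<in> A a (Min X)" "X \<in> F c"
          using mem_F_limitE[OF limit less.prems(1)] False less.prems(2) by blast
        moreover have "Y \<in> F c"
          using less.IH[OF A_less[OF limit c(1)] c(2) less.prems(2)] .
        ultimately show ?thesis using mem_F_limitI[OF limit c(1) _ False] by blast
      qed
    qed
  qed
qed

lemma mem_F_replace_greater:
  "X \<in> F a \<Longrightarrow> x \<in> X \<Longrightarrow> y \<notin> X \<Longrightarrow> x < y \<Longrightarrow> insert y (X - {x}) \<in> F a"
proof (induction a arbitrary: X rule: less_induct)
  case (less a X)
  have "X \<noteq> {}" using less.prems(2) by blast
  show ?case
  proof (cases a rule: ordinal_cases)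
    case zero
    then show ?thesis using mem_F_zero[OF zero less.prems(1)] \<open>X \<noteq> {}\<close> by simp
  next
    case (succ b)
    obtain n Z where X: "X = insert n Z" "Z \<in> F b"
      using mem_F_succE[OF succ less.prems(1) \<open>X \<noteq> {}\<close>] by blast
    show ?thesis
    proof (cases "x \<in> Z")
      case True
      have "insert y (Z - {x}) \<in> F b"
        using less.IH[OF is_succ_of_less[OF succ] X(2) True] less.prems(3,4) X(1) by simp
      then have "insert (if x = n then y else n) (insert y (Z - {x})) \<in> F a"
        by (rule mem_F_succI[OF succ])
      moreover have "insert (if x = n then y else n) (insert y (Z - {x})) = insert y (X - {x})"
        using X(1) True by auto
      ultimately show ?thesis by simp
    next
      case False
      then have "insert y (X - {x}) = insert y Z"
        using X(1) less.prems(2) by auto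
      then show ?thesis using mem_F_succI[OF succ X(2)] by simp
    qed
  next
    case limit
    obtain c where c: "c \<in> A a (Min X)" "X \<in> F c"
      using mem_F_limitE[OF limit less.prems(1) \<open>X \<noteq> {}\<close>] by blast
    have "finite X" using finite_F[OF less.prems(1)] .
    then have "Min X \<le> Min (insert y (X - {x}))"
      using less.prems(2,4) by (auto simp: Min_le_iff intro: Min_le less_imp_le order_trans)
    moreover have "insert y (X - {x}) \<in> F c"
      using less.IH[OF A_less[OF limit c(1)] c(2) less.prems(2-4)] .
    ultimately show ?thesis using mem_F_limitI[OF limit c(1)] by blast
  qed
qed

lemma mem_F_succ_remove_Min:
  assumes succ: "is_succ_of a b" and "X \<in> F a" "X \<noteq> {}"
  shows "X - {Min X} \<in> F b"
proof -
  obtain n Z where X: "X = insert n Z" "Z \<in> F b"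
    using mem_F_succE[OF assms] by blast
  have "finite X" using finite_F[OF assms(2)] .
  show ?thesis
  proof (cases "n = Min X \<or> n \<in> Z")
    case True
    then have "X - {Min X} \<subseteq> Z" using X(1) by auto
    then show ?thesis using hereditary_F X(2) unfolding hereditary_def by blast
  next
    case False
    have "Min X \<le> n" using Min_le[OF \<open>finite X\<close>] X(1) by simp
    then have "Min X \<in> Z" "Min X < n"
      using Min_in[OF \<open>finite X\<close> assms(3)] X(1) False by auto
    then have "insert n (Z - {Min X}) \<in> F b"
      using mem_F_replace_greater[OF X(2)] False by blast
    moreover have "insert n (Z - {Min X}) = X - {Min X}" using X(1) False by auto
    ultimately show ?thesis by simp
  qed
qed

lemma mem_F_image_strict_mono: "strict_mono g \<Longrightarrow> X \<in> F a \<Longrightarrow> g ` X \<in> F a"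
proof (induction a arbitrary: X rule: less_induct)
  case (less a X)
  show ?case
  proof (cases "X = {}")
    case True
    then show ?thesis by (simp add: empty_mem_F)
  next
    case False
    show ?thesis
    proof (cases a rule: ordinal_cases)
      case zero
      then show ?thesis using mem_F_zero[OF zero less.prems(2)] False by simp
    next
      case (succ b)
      obtain n Z where X: "X = insert n Z" "Z \<in> F b"
        using mem_F_succE[OF succ less.prems(2) False] by blast
      have "g ` Z \<in> F b" by (rule less.IH[OF is_succ_of_less[OF succ] less.prems(1) X(2)])
      then show ?thesis using mem_F_succI[OF succ] X(1) by simp
    next
      case limit
      obtain c where c: "c \<in> A a (Min X)" "X \<in> F c"
        using mem_F_limitE[OF limit less.prems(2) False] by blast
      have "Min (g ` X) = g (Min X)"
        using mono_Min_commute[OF strict_mono_mono[OF less.prems(1)] finite_F[OF less.prems(2)] False]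
        by simp
      then have "Min X \<le> Min (g ` X)" using strict_mono_imp_increasing[OF less.prems(1)] by simp
      moreover have "g ` X \<in> F c" by (rule less.IH[OF A_less[OF limit c(1)] less.prems(1) c(2)])
      ultimately show ?thesis using mem_F_limitI[OF limit c(1)] False by blast
    qed
  qed
qed

lemma rank_ge_F_nonempty_less: "rank_ge (F a) E b \<Longrightarrow> E \<noteq> {} \<Longrightarrow> b < a"
proof (induction a arbitrary: E b rule: less_induct)
  case (less a E b)
  have "E \<in> F a" using rank_ge_mem[OF less.prems(1)] .
  then have "finite E" by (rule finite_F)
  show ?case
  proof (cases a rule: ordinal_cases)
    case zero
    then show ?thesis using mem_F_zero[OF zero \<open>E \<in> F a\<close>] less.prems(2) by simp
  next
    case (succ a')
    have "a' < a" using is_succ_of_less[OF succ] .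
    have rank: "rank_ge (F a') (E - {Min E}) b"
      using rank_ge_remove_Min[OF less.prems(1,2) \<open>finite E\<close>] mem_F_succ_remove_Min[OF succ] .
    have "b \<le> a'"
    proof (cases "E - {Min E} = {}")
      case True
      have "\<not> rank_ge (F a') {n} a'" for n
        using less.IH[OF \<open>a' < a\<close>, of "{n}" a'] by blast
      then show ?thesis using rank_ge_root_le rank True by metis
    next
      case False
      then show ?thesis using less.IH[OF \<open>a' < a\<close> rank] by simp
    qed
    then show ?thesis using \<open>a' < a\<close> by (rule le_less_trans)
  next
    case limit
    have "X \<in> (\<Union>c\<in>A a (Min E). F c)" if "end_extends X E" "X \<in> F a" for X
    proof -
      have "X \<noteq> {}" using that(1) less.prems(2) unfolding end_extends_def by blast
      moreover have "Min X = Min E"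
        using Min_end_extension[OF that(1) finite_F[OF that(2)] less.prems(2)] .
      ultimately show ?thesis using mem_F_limitE[OF limit that(2)] by auto
    qed
    then have "rank_ge (\<Union>c\<in>A a (Min E). F c) E b"
      using rank_ge_end_extensions[OF less.prems(1) \<open>finite E\<close>] by blast
    then obtain c where c: "c \<in> A a (Min E)" "rank_ge (F c) E b"
      using rank_ge_UN[where G = F, OF _ finite_A[OF limit] hereditary_F] by blast
    have "c < a" using A_less[OF limit c(1)] .
    then show ?thesis using less.IH[OF \<open>c < a\<close> c(2) less.prems(2)] by (rule less_trans[rotated])
  qed
qed

lemma rank_ge_F_root_le: "rank_ge (F a) {} b \<Longrightarrow> b \<le> a"
  using rank_ge_root_le rank_ge_F_nonempty_less by blast

lemma rank_ge_F_root: "rank_ge (F a) {} a"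
proof (induction a rule: less_induct)
  case (less a)
  show ?case
  proof (rule rank_geI[OF empty_mem_F])
    fix c assume "c < a"
    show "\<exists>\<^sub>\<infinity>n. rank_ge (F a) {n} c"
    proof (cases a rule: ordinal_cases)
      case zero
      then show ?thesis using is_zero_ord_not_less \<open>c < a\<close> by blast
    next
      case (succ a')
      have "rank_ge (F a') {} c"
        using rank_ge_le[OF less.IH[OF is_succ_of_less[OF succ]] is_succ_of_le[OF succ \<open>c < a\<close>]] .
      then have "rank_ge (F a) {n} c" for n
        using rank_ge_insert mem_F_succI[OF succ] by blast
      then show ?thesis by (simp add: INFM_nat)
    next
      case limit
      obtain d where "c < d" "d < a" using is_limit_ord_dense[OF limit \<open>c < a\<close>] by blast
      then obtain m c' where c': "c' \<in> A a m" "c < c'"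
        using A_cofinal[OF limit] less_le_trans by metis
      have "c' < a" using A_less[OF limit c'(1)] .
      have often: "\<exists>\<^sub>\<infinity>n. rank_ge (F c') {n} c \<and> m \<le> n"
        using rank_ge_INFM[OF less.IH[OF \<open>c' < a\<close>] c'(2)] MOST_ge_nat by (rule INFM_conjI)
      have ext: "X \<in> F a" if "m \<le> n" "end_extends X {n}" "X \<in> F c'" for n X
      proof -
        have "X \<noteq> {}" using that(2) unfolding end_extends_def by blast
        moreover have "Min X = n" using Min_end_extension[OF that(2) finite_F[OF that(3)]] by simp
        ultimately show ?thesis using mem_F_limitI[OF limit c'(1)] that by simp
      qed
      show ?thesis
        using often
      proof (rule INFM_mono)
        fix n assume "rank_ge (F c') {n} c \<and> m \<le> n"
        then show "rank_ge (F a) {n} c"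
          using rank_ge_end_extensions[of "F c'" "{n}" c "F a"] ext by blast
      qed
    qed
  qed
qed

lemma is_large_F_self:
  assumes "infinite L"
  shows "is_large F a (F a) L"
  unfolding is_large_def
proof (intro allI impI)
  fix M assume M: "M \<subseteq> L \<and> infinite M"
  have "fam_on (F a) M \<subseteq> F a"
    using mem_F_image_strict_mono[OF strict_mono_enumerate] M unfolding fam_on_def by blast
  then show "\<exists>N\<subseteq>M. infinite N \<and> fam_on (F a) N \<subseteq> F a" using M by blast
qed

lemma is_large_F_le:
  assumes "is_large F b (F a) L" and "infinite L"
  shows "b \<le> a"
proof -
  obtain N where "infinite N" "fam_on (F b) N \<subseteq> F a"
    using assms unfolding is_large_def by blast
  moreover have "rank_ge (fam_on (F b) N) {} b"
    using rank_ge_image[OF rank_ge_F_root inj_enumerate[OF \<open>infinite N\<close>]]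
    unfolding fam_on_def by simp
  ultimately show ?thesis using rank_ge_mono rank_ge_F_root_le by blast
qed

end

theorem corollary4:
  fixes A :: "'o::wellorder \<Rightarrow> nat \<Rightarrow> 'o set"
    and F :: "'o \<Rightarrow> nat set set"
    and a :: 'o and L :: "nat set"
  assumes "countable_ordinals TYPE('o)"
    and "approximating_family A"
    and "transfinite_family A F"
    and "infinite L"
  shows "index_eq F (F a) L a"
proof -
  interpret transfinite_hierarchy A F using assms(2,3) by unfold_locales
  show ?thesis
    unfolding index_eq_def using is_large_F_self[OF assms(4)] is_large_F_le[OF _ assms(4)] by blast
qed

end
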